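(* Let $\mathrm{E}$ be the equation $l\simeq r$ with $l\in M_X$ not a variable, and let $R\colon M_X\to M_X$ be weakly collapsing, a weak canonizer for $\mathrm{E}$, and non-overlapping for $\mathrm{E}$. Then for all words $w,w'\in M_X$ with $w\sim_{\mathrm{E}}w'$ one has $C_R(w)=C_R(w')$.
   Context: $M_X$ is the set of words of the free magma on alphabet $X$. For words $w,w'$, $w\sim_{\mathrm{E}}w'$ means the law $w\simeq w'$ is a consequence of $\mathrm{E}$ (every magma satisfying $\mathrm{E}$ satisfies $w\simeq w'$); equivalently, $w'$ is obtained from $w$ by finitely many replacements of a subword of the form $\varphi_\theta l$ by $\varphi_\theta r$ or vice versa. A substitution is a map $\theta\colon X\to M_X$, and $\varphi_\theta$ its extension to a magma endomorphism of $M_X$. A subword of $w$ is a subterm of $w$ (including $w$); a strict subword is one different from $w$. $R$ is weakly collapsing if $R(w)$ is a subword of $w$ for every $w$; $R$ is a weak canonizer for $\mathrm{E}$ if $R(\varphi_\theta l)=\varphi_\theta r$ for every substitution $\theta$; $R$ is non-overlapping for $\mathrm{E}$ if $R(\varphi_\theta w)=\varphi_\theta w$ for every substitution $\theta$ and every strict subword $w$ of $l$ that is not a variable. The map $C_R$ is defined by $C_R(x)=x$ for $x\in X$ and $C_R(w\diamond w')=R(C_R(w)\diamond C_R(w'))$. *)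

theory Defs
  imports Main
begin

datatype 'x mword = V 'x | Op "'x mword" "'x mword"

fun subst :: "('x \<Rightarrow> 'x mword) \<Rightarrow> 'x mword \<Rightarrow> 'x mword" where
  "subst \<theta> (V x) = \<theta> x"
| "subst \<theta> (Op u v) = Op (subst \<theta> u) (subst \<theta> v)"

fun subwords :: "'x mword \<Rightarrow> 'x mword set" where
  "subwords (V x) = {V x}"
| "subwords (Op u v) = insert (Op u v) (subwords u \<union> subwords v)"

inductive estep :: "'x mword \<Rightarrow> 'x mword \<Rightarrow> 'x mword \<Rightarrow> 'x mword \<Rightarrow> bool"
  for l r :: "'x mword" where
  fwd: "estep l r (subst \<theta> l) (subst \<theta> r)"
| bwd: "estep l r (subst \<theta> r) (subst \<theta> l)"
| congL: "estep l r u u' \<Longrightarrow> estep l r (Op u v) (Op u' v)"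
| congR: "estep l r v v' \<Longrightarrow> estep l r (Op u v) (Op u v')"

definition eequiv :: "'x mword \<Rightarrow> 'x mword \<Rightarrow> 'x mword \<Rightarrow> 'x mword \<Rightarrow> bool" where
  "eequiv l r w w' \<longleftrightarrow> (estep l r)\<^sup>*\<^sup>* w w'"

definition weakly_collapsing :: "('x mword \<Rightarrow> 'x mword) \<Rightarrow> bool" where
  "weakly_collapsing R \<longleftrightarrow> (\<forall>w. R w \<in> subwords w)"

definition weak_canonizer :: "'x mword \<Rightarrow> 'x mword \<Rightarrow> ('x mword \<Rightarrow> 'x mword) \<Rightarrow> bool" where
  "weak_canonizer l r R \<longleftrightarrow> (\<forall>\<theta>. R (subst \<theta> l) = subst \<theta> r)"

definition non_overlapping :: "'x mword \<Rightarrow> 'x mword \<Rightarrow> ('x mword \<Rightarrow> 'x mword) \<Rightarrow> bool" where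
  "non_overlapping l r R \<longleftrightarrow>
     (\<forall>\<theta> w. w \<in> subwords l \<and> w \<noteq> l \<and> (\<forall>x. w \<noteq> V x) \<longrightarrow> R (subst \<theta> w) = subst \<theta> w)"

fun CR :: "('x mword \<Rightarrow> 'x mword) \<Rightarrow> 'x mword \<Rightarrow> 'x mword" where
  "CR R (V x) = V x"
| "CR R (Op u v) = R (Op (CR R u) (CR R v))"

end

theory Submission
  imports Defs
begin

text \<open>
  Write \<open>\<theta>' = C\<^sub>R \<circ> \<theta>\<close>. Non-overlapping means \<open>R\<close> fixes every instance of a non-variable
  strict subword of \<open>l\<close>, so by induction \<open>C\<^sub>R(\<theta> w) = \<theta>' w\<close> for every strict subword \<open>w\<close>
  of \<open>l\<close>; applying the canonizer once more at the root gives \<open>C\<^sub>R(\<theta> l) = \<theta>' r\<close>.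
  Since \<open>r = R l\<close> is a subword of \<open>l\<close>, either \<open>r = l\<close> or \<open>r\<close> is a strict subword, and in
  both cases \<open>C\<^sub>R(\<theta> r) = \<theta>' r\<close>. As \<open>C\<^sub>R\<close> is computed bottom-up, equality of \<open>C\<^sub>R\<close> on the
  replaced subword propagates to the whole word, so \<open>C\<^sub>R\<close> is invariant under each step.
\<close>

lemma subwords_refl: "w \<in> subwords w"
  by (cases w) auto

lemma subwords_subset: "u \<in> subwords w \<Longrightarrow> subwords u \<subseteq> subwords w"
  by (induction w) auto

lemma size_subwords_less: "u \<in> subwords w \<Longrightarrow> u \<noteq> w \<Longrightarrow> size u < size w"
  by (induction w) fastforce+

lemma subst_V_id: "subst V w = w"
  by (induction w) auto

lemma rhs_in_subwords_lhs:
  assumes "weakly_collapsing R" and "weak_canonizer l r R"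
  shows "r \<in> subwords l"
  using assms subst_V_id unfolding weakly_collapsing_def weak_canonizer_def by metis

lemma CR_subst_strict_subword:
  assumes "non_overlapping l r R" and "w \<in> subwords l" and "w \<noteq> l"
  shows "CR R (subst \<theta> w) = subst (\<lambda>x. CR R (\<theta> x)) w"
  using assms(2,3)
proof (induction w)
  case (Op u v)
  have sub: "u \<in> subwords l" "v \<in> subwords l"
    using Op.prems(1) subwords_subset subwords_refl by fastforce+
  moreover have "size (Op u v) \<le> size l"
    using Op.prems size_subwords_less by fastforce
  ultimately have "u \<noteq> l" "v \<noteq> l"
    by auto
  then have "CR R (subst \<theta> (Op u v)) = R (subst (\<lambda>x. CR R (\<theta> x)) (Op u v))"
    using Op.IH sub by simp
  also have "\<dots> = subst (\<lambda>x. CR R (\<theta> x)) (Op u v)"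
    using assms(1) Op.prems unfolding non_overlapping_def by blast
  finally show ?case .
qed simp

lemma CR_subst_lhs:
  assumes "\<forall>x. l \<noteq> V x" and "weak_canonizer l r R" and "non_overlapping l r R"
  shows "CR R (subst \<theta> l) = subst (\<lambda>x. CR R (\<theta> x)) r"
proof -
  obtain u v where l: "l = Op u v"
    using assms(1) by (cases l) auto
  have "u \<in> subwords l" "v \<in> subwords l" "u \<noteq> l" "v \<noteq> l"
    using l subwords_refl by auto
  then have "CR R (subst \<theta> l) = R (subst (\<lambda>x. CR R (\<theta> x)) l)"
    using CR_subst_strict_subword[OF assms(3)] l by simp
  then show ?thesis
    using assms(2) unfolding weak_canonizer_def by simp
qed

lemma CR_subst_rhs:
  assumes "\<forall>x. l \<noteq> V x" and "weakly_collapsing R" and "weak_canonizer l r R"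
    and "non_overlapping l r R"
  shows "CR R (subst \<theta> r) = subst (\<lambda>x. CR R (\<theta> x)) r"
proof (cases "r = l")
  case True
  then show ?thesis
    using CR_subst_lhs[OF assms(1,3,4)] by simp
next
  case False
  then show ?thesis
    using CR_subst_strict_subword[OF assms(4) rhs_in_subwords_lhs[OF assms(2,3)]] by simp
qed

lemma CR_estep:
  assumes "\<forall>x. l \<noteq> V x" and "weakly_collapsing R" and "weak_canonizer l r R"
    and "non_overlapping l r R"
  shows "estep l r w w' \<Longrightarrow> CR R w = CR R w'"
  by (induction rule: estep.induct) (simp_all add: CR_subst_lhs[OF assms(1,3,4)] CR_subst_rhs[OF assms])

theorem mainTheorem8:
  fixes l r :: "'x mword" and R :: "'x mword \<Rightarrow> 'x mword"
  assumes "\<forall>x. l \<noteq> V x"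
    and "weakly_collapsing R"
    and "weak_canonizer l r R"
    and "non_overlapping l r R"
  shows "\<forall>w w'. eequiv l r w w' \<longrightarrow> CR R w = CR R w'"
proof (intro allI impI)
  fix w w'
  assume "eequiv l r w w'"
  then have "(estep l r)\<^sup>*\<^sup>* w w'"
    unfolding eequiv_def .
  then show "CR R w = CR R w'"
    by induction (simp_all add: CR_estep[OF assms])
qed

end
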